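(* Let $M$ be a Poisson manifold with a local star product $*$ and let $\omega:C^\infty_0(M)[[\lambda]]\to\mathbb C[[\lambda]]$ be a faithful positive $\mathbb C[[\lambda]]$-linear functional. Then $\operatorname{supp}\psi_f=\operatorname{supp}f$ for all $f\in C^\infty_0(M)[[\lambda]]$.
   Context: $C^\infty(M)$ denotes complex-valued smooth functions and $\lambda$ is a formal parameter. A (local) star product $*$ on $M$ is an associative $\mathbb C[[\lambda]]$-bilinear product on $C^\infty(M)[[\lambda]]$ with $f*g=\sum_{r\ge0}\lambda^rM_r(f,g)$ for $f,g\in C^\infty(M)$, where the $M_r$ are local operators, $M_0(f,g)=fg$, $M_1(f,g)-M_1(g,f)=\mathrm i\{f,g\}$, $M_r$ vanishes on constants for $r\ge1$, and $\overline{f*g}=\bar g*\bar f$ ($\bar\lambda=\lambda$). For $f=\sum_r\lambda^rf_r$, $\operatorname{supp}f$ is the closure of $\bigcup_r\operatorname{supp}f_r$; $C^\infty_0(O)[[\lambda]]$ is the set of series all of whose coefficients have compact support in $O$. $\mathbb R[[\lambda]]$ is ordered by: $a>0$ iff its lowest-order nonzero coefficient is positive; $\omega$ is positive if $\omega(\bar f*f)\ge0$ for all $f$, and faithful if $\mathcal J_\omega=\{f:\omega(\bar f*f)=0\}=\{0\}$. The support of a $\mathbb C[[\lambda]]$-linear functional $\sigma$ on $C^\infty_0(M)[[\lambda]]$ is the complement of the union of all open $U$ with $\sigma|_{C^\infty_0(U)[[\lambda]]}=0$. $\psi_f$ is the class of $f$ in the GNS space $\mathfrak H_\omega=C^\infty_0(M)[[\lambda]]/\mathcal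 J_\omega$, and $\operatorname{supp}\psi_f:=\operatorname{supp}\omega_f$ with $\omega_f(g)=\omega(\bar f*g*f)$. *)

theory Defs
  imports "HOL-Analysis.Analysis"
begin

fun iter_dderiv :: "'a::real_normed_vector list \<Rightarrow> ('a \<Rightarrow> 'b::real_normed_vector) \<Rightarrow> 'a \<Rightarrow> 'b" where
  "iter_dderiv [] f = f"
| "iter_dderiv (v # vs) f = (\<lambda>x. frechet_derivative (iter_dderiv vs f) (at x) v)"

definition smooth_on :: "'a::real_normed_vector set \<Rightarrow> ('a \<Rightarrow> 'b::real_normed_vector) \<Rightarrow> bool" where
  "smooth_on S f \<longleftrightarrow>
     (\<forall>vs. (\<forall>x\<in>S. iter_dderiv vs f differentiable (at x)) \<and> continuous_on S (iter_dderiv vs f))"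

definition is_chart :: "'m::topological_space set \<Rightarrow> ('m \<Rightarrow> real^'n::finite) \<Rightarrow> bool" where
  "is_chart U \<phi> \<longleftrightarrow> open U \<and> open (\<phi> ` U) \<and> homeomorphism U (\<phi> ` U) \<phi> (inv_into U \<phi>)"

definition smooth_atlas :: "('m::topological_space set \<times> ('m \<Rightarrow> real^'n::finite)) set \<Rightarrow> bool" where
  "smooth_atlas A \<longleftrightarrow>
     (\<forall>(U,\<phi>)\<in>A. is_chart U \<phi>) \<and> (\<Union>p\<in>A. fst p) = UNIV \<and>
     (\<forall>(U,\<phi>)\<in>A. \<forall>(V,\<psi>)\<in>A. smooth_on (\<phi> ` (U \<inter> V)) (\<psi> \<circ> inv_into U \<phi>))"

definition smooth_fun :: "('m::topological_space set \<times> ('m \<Rightarrow> real^'n::finite)) set \<Rightarrow> ('m \<Rightarrow> complex) \<Rightarrow> bool" where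
  "smooth_fun A f \<longleftrightarrow> (\<forall>(U,\<phi>)\<in>A. smooth_on (\<phi> ` U) (f \<circ> inv_into U \<phi>))"

definition fsupp :: "('m::topological_space \<Rightarrow> complex) \<Rightarrow> 'm set" where
  "fsupp f = closure {x. f x \<noteq> 0}"

text \<open>A Poisson bracket on C^infinity(M) (complex-bilinear extension of a real Poisson bracket).\<close>
definition poisson_bracket ::
  "('m::topological_space set \<times> ('m \<Rightarrow> real^'n::finite)) set \<Rightarrow>
   (('m \<Rightarrow> complex) \<Rightarrow> ('m \<Rightarrow> complex) \<Rightarrow> ('m \<Rightarrow> complex)) \<Rightarrow> bool" where
  "poisson_bracket A pb \<longleftrightarrow>
     (\<forall>f g. smooth_fun A f \<and> smooth_fun A g \<longrightarrow> smooth_fun A (pb f g)) \<and>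
     (\<forall>a f g h. smooth_fun A f \<and> smooth_fun A g \<and> smooth_fun A h \<longrightarrow>
        pb (\<lambda>x. a * f x + g x) h = (\<lambda>x. a * pb f h x + pb g h x)) \<and>
     (\<forall>f g. smooth_fun A f \<and> smooth_fun A g \<longrightarrow> pb f g = (\<lambda>x. - pb g f x)) \<and>
     (\<forall>f g h. smooth_fun A f \<and> smooth_fun A g \<and> smooth_fun A h \<longrightarrow>
        pb f (\<lambda>x. g x * h x) = (\<lambda>x. pb f g x * h x + g x * pb f h x)) \<and>
     (\<forall>f g h. smooth_fun A f \<and> smooth_fun A g \<and> smooth_fun A h \<longrightarrow>
        (\<lambda>x. pb f (pb g h) x + pb g (pb h f) x + pb h (pb f g) x) = (\<lambda>x. 0)) \<and>
     (\<forall>f g. smooth_fun A f \<and> smooth_fun A g \<longrightarrow>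
        pb (\<lambda>x. cnj (f x)) (\<lambda>x. cnj (g x)) = (\<lambda>x. cnj (pb f g x)))"

text \<open>Elements of C^infinity(M)[[lambda]] are coefficient sequences nat => ('m => complex);
  elements of C[[lambda]] are coefficient sequences nat => complex.\<close>

definition smooth_series :: "('m::topological_space set \<times> ('m \<Rightarrow> real^'n::finite)) set \<Rightarrow> (nat \<Rightarrow> 'm \<Rightarrow> complex) \<Rightarrow> bool" where
  "smooth_series A F \<longleftrightarrow> (\<forall>n. smooth_fun A (F n))"

definition star :: "(nat \<Rightarrow> ('m \<Rightarrow> complex) \<Rightarrow> ('m \<Rightarrow> complex) \<Rightarrow> ('m \<Rightarrow> complex)) \<Rightarrow>
    (nat \<Rightarrow> 'm \<Rightarrow> complex) \<Rightarrow> (nat \<Rightarrow> 'm \<Rightarrow> complex) \<Rightarrow> (nat \<Rightarrow> 'm \<Rightarrow> complex)" where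
  "star Mr F G = (\<lambda>n x. \<Sum>r\<le>n. \<Sum>i\<le>n - r. Mr r (F i) (G (n - r - i)) x)"

definition sconj :: "(nat \<Rightarrow> 'm \<Rightarrow> complex) \<Rightarrow> (nat \<Rightarrow> 'm \<Rightarrow> complex)" where
  "sconj F = (\<lambda>n x. cnj (F n x))"

definition sadd :: "(nat \<Rightarrow> 'm \<Rightarrow> complex) \<Rightarrow> (nat \<Rightarrow> 'm \<Rightarrow> complex) \<Rightarrow> (nat \<Rightarrow> 'm \<Rightarrow> complex)" where
  "sadd F G = (\<lambda>n x. F n x + G n x)"

definition smul :: "(nat \<Rightarrow> complex) \<Rightarrow> (nat \<Rightarrow> 'm \<Rightarrow> complex) \<Rightarrow> (nat \<Rightarrow> 'm \<Rightarrow> complex)" where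
  "smul a F = (\<lambda>n x. \<Sum>k\<le>n. a k * F (n - k) x)"

definition cmul :: "(nat \<Rightarrow> complex) \<Rightarrow> (nat \<Rightarrow> complex) \<Rightarrow> (nat \<Rightarrow> complex)" where
  "cmul a b = (\<lambda>n. \<Sum>k\<le>n. a k * b (n - k))"

definition local_star_product ::
  "('m::topological_space set \<times> ('m \<Rightarrow> real^'n::finite)) set \<Rightarrow>
   (('m \<Rightarrow> complex) \<Rightarrow> ('m \<Rightarrow> complex) \<Rightarrow> ('m \<Rightarrow> complex)) \<Rightarrow>
   (nat \<Rightarrow> ('m \<Rightarrow> complex) \<Rightarrow> ('m \<Rightarrow> complex) \<Rightarrow> ('m \<Rightarrow> complex)) \<Rightarrow> bool" where
  "local_star_product A pb Mr \<longleftrightarrow>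
     (\<forall>r f g. smooth_fun A f \<and> smooth_fun A g \<longrightarrow> smooth_fun A (Mr r f g)) \<and>
     (\<forall>r a f g h. smooth_fun A f \<and> smooth_fun A g \<and> smooth_fun A h \<longrightarrow>
        Mr r (\<lambda>x. a * f x + g x) h = (\<lambda>x. a * Mr r f h x + Mr r g h x) \<and>
        Mr r h (\<lambda>x. a * f x + g x) = (\<lambda>x. a * Mr r h f x + Mr r h g x)) \<and>
     (\<forall>r f g. smooth_fun A f \<and> smooth_fun A g \<longrightarrow> fsupp (Mr r f g) \<subseteq> fsupp f \<inter> fsupp g) \<and>
     (\<forall>f g. smooth_fun A f \<and> smooth_fun A g \<longrightarrow> Mr 0 f g = (\<lambda>x. f x * g x)) \<and>
     (\<forall>f g. smooth_fun A f \<and> smooth_fun A g \<longrightarrow>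
        (\<lambda>x. Mr 1 f g x - Mr 1 g f x) = (\<lambda>x. \<i> * pb f g x)) \<and>
     (\<forall>r c f. r \<ge> 1 \<and> smooth_fun A f \<longrightarrow> Mr r (\<lambda>_. c) f = (\<lambda>_. 0) \<and> Mr r f (\<lambda>_. c) = (\<lambda>_. 0)) \<and>
     (\<forall>r f g. smooth_fun A f \<and> smooth_fun A g \<longrightarrow>
        (\<lambda>x. cnj (Mr r f g x)) = Mr r (\<lambda>x. cnj (g x)) (\<lambda>x. cnj (f x))) \<and>
     (\<forall>F G H. smooth_series A F \<and> smooth_series A G \<and> smooth_series A H \<longrightarrow>
        star Mr (star Mr F G) H = star Mr F (star Mr G H))"

definition compact_series_in ::
  "('m::topological_space set \<times> ('m \<Rightarrow> real^'n::finite)) set \<Rightarrow> 'm set \<Rightarrow> (nat \<Rightarrow> 'm \<Rightarrow> complex) \<Rightarrow> bool" where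
  "compact_series_in A W F \<longleftrightarrow> (\<forall>n. smooth_fun A (F n) \<and> compact (fsupp (F n)) \<and> fsupp (F n) \<subseteq> W)"

definition ssupp :: "(nat \<Rightarrow> 'm::topological_space \<Rightarrow> complex) \<Rightarrow> 'm set" where
  "ssupp F = closure (\<Union>n. {x. F n x \<noteq> 0})"

text \<open>Order on R[[lambda]] inside C[[lambda]]: real coefficients, zero or lowest nonzero coefficient positive.\<close>
definition fps_nonneg :: "(nat \<Rightarrow> complex) \<Rightarrow> bool" where
  "fps_nonneg a \<longleftrightarrow> (\<forall>n. Im (a n) = 0) \<and> (a = (\<lambda>_. 0) \<or> Re (a (LEAST n. a n \<noteq> 0)) > 0)"

definition lambda_linear ::
  "('m::topological_space set \<times> ('m \<Rightarrow> real^'n::finite)) set \<Rightarrow> ((nat \<Rightarrow> 'm \<Rightarrow> complex) \<Rightarrow> (nat \<Rightarrow> complex)) \<Rightarrow> bool" where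
  "lambda_linear A \<omega> \<longleftrightarrow>
     (\<forall>F G. compact_series_in A UNIV F \<and> compact_series_in A UNIV G \<longrightarrow>
        \<omega> (sadd F G) = (\<lambda>n. \<omega> F n + \<omega> G n)) \<and>
     (\<forall>a F. compact_series_in A UNIV F \<longrightarrow> \<omega> (smul a F) = cmul a (\<omega> F))"

definition positive_functional where
  "positive_functional A Mr \<omega> \<longleftrightarrow>
     (\<forall>F. compact_series_in A UNIV F \<longrightarrow> fps_nonneg (\<omega> (star Mr (sconj F) F)))"

definition faithful_functional where
  "faithful_functional A Mr \<omega> \<longleftrightarrow>
     (\<forall>F. compact_series_in A UNIV F \<and> \<omega> (star Mr (sconj F) F) = (\<lambda>_. 0) \<longrightarrow> F = (\<lambda>_ _. 0))"

definition functional_supp ::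
  "('m::topological_space set \<times> ('m \<Rightarrow> real^'n::finite)) set \<Rightarrow> ((nat \<Rightarrow> 'm \<Rightarrow> complex) \<Rightarrow> (nat \<Rightarrow> complex)) \<Rightarrow> 'm set" where
  "functional_supp A \<sigma> = - \<Union>{U. open U \<and> (\<forall>F. compact_series_in A U F \<longrightarrow> \<sigma> F = (\<lambda>_. 0))}"

text \<open>supp psi_f := supp omega_f, omega_f(g) = omega(conj f * g * f).\<close>
definition gns_vector_supp where
  "gns_vector_supp A Mr \<omega> F = functional_supp A (\<lambda>G. \<omega> (star Mr (star Mr (sconj F) G) F))"

end

theory Submission
  imports Defs
begin

(* If x lies outside supp f, then conj f * g = 0 for every g supported in the complement of
   supp f, because the operators M_r are local; hence omega_f vanishes near x.
   Conversely, let U be an open neighbourhood of a point of supp f and n the lowest order for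
   which f_n does not vanish identically on U, say f_n(y) is nonzero for some y in U. For a bump
   function b supported in U with b(y) nonzero, locality kills every term of order n in b * f
   except b f_n, so b * f is nonzero and faithfulness gives omega(conj (b * f) * (b * f)) nonzero.
   But this is omega_f(conj b * b), and conj b * b is supported in U.
   Neither the Poisson bracket nor the positivity of omega plays a role. *)

section \<open>Finite-order smoothness on normed spaces\<close>

(* The derivatives of order at most k are required to be differentiable, not just continuous. *)
definition Ck_on :: "nat \<Rightarrow> 'a::real_normed_vector set \<Rightarrow> ('a \<Rightarrow> 'b::real_normed_vector) \<Rightarrow> bool" where
  "Ck_on k S f \<longleftrightarrow>
     (\<forall>vs. length vs \<le> k \<longrightarrow>
        (\<forall>x\<in>S. iter_dderiv vs f differentiable (at x)) \<and> continuous_on S (iter_dderiv vs f))"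

lemma smooth_on_iff_Ck_on: "smooth_on S f \<longleftrightarrow> (\<forall>k. Ck_on k S f)"
  unfolding smooth_on_def Ck_on_def by auto

lemma iter_dderiv_append: "iter_dderiv (vs @ ws) f = iter_dderiv vs (iter_dderiv ws f)"
  by (induction vs) auto

lemma frechet_derivative_cong_open:
  assumes "open S" "x \<in> S" "\<And>y. y \<in> S \<Longrightarrow> f y = g y"
  shows "frechet_derivative f (at x) = frechet_derivative g (at x)"
proof -
  have "(f has_derivative D) (at x) \<longleftrightarrow> (g has_derivative D) (at x)" for D
    using has_derivative_transform_within_open assms by metis
  then show ?thesis unfolding frechet_derivative_def by simp
qed

lemma iter_dderiv_cong_open:
  assumes "open S" "\<And>y. y \<in> S \<Longrightarrow> f y = g y" "x \<in> S"
  shows "iter_dderiv vs f x = iter_dderiv vs g x"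
  using assms(3)
proof (induction vs arbitrary: x)
  case Nil
  then show ?case using assms(2) by simp
next
  case (Cons v vs)
  then show ?case
    using frechet_derivative_cong_open[OF assms(1), of x "iter_dderiv vs f" "iter_dderiv vs g"] by simp
qed

lemma Ck_on_0: "Ck_on 0 S f \<longleftrightarrow> (\<forall>x\<in>S. f differentiable (at x))"
  unfolding Ck_on_def
  by (auto intro: continuous_at_imp_continuous_on differentiable_imp_continuous_within)

lemma Ck_on_mono: "Ck_on k S f \<Longrightarrow> j \<le> k \<Longrightarrow> Ck_on j S f"
  unfolding Ck_on_def by auto

lemma Ck_on_Suc: "Ck_on (Suc k) S f \<longleftrightarrow> Ck_on 0 S f \<and> (\<forall>v. Ck_on k S (iter_dderiv [v] f))"
proof
  assume f: "Ck_on (Suc k) S f"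
  have "Ck_on k S (iter_dderiv [v] f)" for v
    unfolding Ck_on_def
  proof (intro allI impI)
    fix vs :: "'a list"
    assume "length vs \<le> k"
    then have "length (vs @ [v]) \<le> Suc k" by simp
    then show "(\<forall>x\<in>S. iter_dderiv vs (iter_dderiv [v] f) differentiable at x) \<and>
         continuous_on S (iter_dderiv vs (iter_dderiv [v] f))"
      using f unfolding Ck_on_def iter_dderiv_append[symmetric] by blast
  qed
  then show "Ck_on 0 S f \<and> (\<forall>v. Ck_on k S (iter_dderiv [v] f))"
    using Ck_on_mono[OF f] by auto
next
  assume f: "Ck_on 0 S f \<and> (\<forall>v. Ck_on k S (iter_dderiv [v] f))"
  show "Ck_on (Suc k) S f"
    unfolding Ck_on_def
  proof (intro allI impI)
    fix vs :: "'a list"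
    assume len: "length vs \<le> Suc k"
    show "(\<forall>x\<in>S. iter_dderiv vs f differentiable at x) \<and> continuous_on S (iter_dderiv vs f)"
    proof (cases vs rule: rev_cases)
      case Nil
      then show ?thesis using f unfolding Ck_on_def by auto
    next
      case (snoc ws v)
      then have "length ws \<le> k" using len by simp
      then show ?thesis using f unfolding snoc iter_dderiv_append Ck_on_def by blast
    qed
  qed
qed

lemma Ck_on_cong:
  assumes "open S" "\<And>x. x \<in> S \<Longrightarrow> f x = g x" "Ck_on k S f"
  shows "Ck_on k S g"
  unfolding Ck_on_def
proof (intro allI impI conjI ballI)
  fix vs :: "'a list"
  assume "length vs \<le> k"
  then have f: "(\<forall>x\<in>S. iter_dderiv vs f differentiable at x) \<and> continuous_on S (iter_dderiv vs f)"
    using assms(3) unfolding Ck_on_def by blast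
  have eq: "iter_dderiv vs f x = iter_dderiv vs g x" if "x \<in> S" for x
    using iter_dderiv_cong_open[OF assms(1,2) that] .
  show "iter_dderiv vs g differentiable at x" if "x \<in> S" for x
  proof -
    have "iter_dderiv vs f differentiable at x"
      using f that by blast
    then obtain D where "(iter_dderiv vs f has_derivative D) (at x)"
      unfolding differentiable_def by blast
    then have "(iter_dderiv vs g has_derivative D) (at x)"
      by (rule has_derivative_transform_within_open[OF _ assms(1) that eq])
    then show ?thesis unfolding differentiable_def by blast
  qed
  have "continuous_on S (iter_dderiv vs f) = continuous_on S (iter_dderiv vs g)"
    by (rule continuous_on_cong[OF refl eq])
  then show "continuous_on S (iter_dderiv vs g)"
    using f by simp
qed

lemma Ck_on_has_derivative:
  "Ck_on k S f \<Longrightarrow> x \<in> S \<Longrightarrow> (f has_derivative frechet_derivative f (at x)) (at x)"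
  using Ck_on_mono[of k S f 0] unfolding Ck_on_0 frechet_derivative_works by auto

lemma Ck_on_derivative: "Ck_on (Suc k) S f \<Longrightarrow> Ck_on k S (\<lambda>x. frechet_derivative f (at x) v)"
  unfolding Ck_on_Suc by auto

lemma Ck_on_SucI:
  assumes "open S" "\<And>x. x \<in> S \<Longrightarrow> (f has_derivative D x) (at x)" "\<And>v. Ck_on k S (\<lambda>x. D x v)"
  shows "Ck_on (Suc k) S f"
  unfolding Ck_on_Suc Ck_on_0
proof (intro conjI allI ballI)
  show "f differentiable at x" if "x \<in> S" for x
    using assms(2)[OF that] unfolding differentiable_def by blast
  show "Ck_on k S (iter_dderiv [v] f)" for v
    by (rule Ck_on_cong[OF assms(1) _ assms(3)]) (simp add: frechet_derivative_at[OF assms(2)])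
qed

lemma Ck_on_const: "Ck_on k S (\<lambda>x. c)"
proof (induction k arbitrary: c)
  case 0
  show ?case unfolding Ck_on_0 by simp
next
  case (Suc k)
  then show ?case unfolding Ck_on_Suc Ck_on_0 by simp
qed

lemma Ck_on_ident: "Ck_on k S (\<lambda>x. x)"
proof (cases k)
  case 0
  then show ?thesis by (simp add: Ck_on_0)
next
  case (Suc j)
  then show ?thesis unfolding Suc Ck_on_Suc Ck_on_0 by (simp add: Ck_on_const)
qed

lemma Ck_on_add:
  assumes "open S"
  shows "Ck_on k S f \<Longrightarrow> Ck_on k S g \<Longrightarrow> Ck_on k S (\<lambda>x. f x + g x)"
proof (induction k arbitrary: f g)
  case 0
  then show ?case unfolding Ck_on_0 by simp
next
  case (Suc k)
  show ?case
    by (rule Ck_on_SucI[OF assms has_derivative_add[OF Ck_on_has_derivative Ck_on_has_derivative]])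
       (use Suc in \<open>auto intro: Suc.IH Ck_on_derivative\<close>)
qed

lemma Ck_on_linear:
  assumes "open S" "bounded_linear L"
  shows "Ck_on k S f \<Longrightarrow> Ck_on k S (\<lambda>x. L (f x))"
proof (induction k arbitrary: f)
  case 0
  then show ?case
    unfolding Ck_on_0 differentiable_def using bounded_linear.has_derivative[OF assms(2)] by blast
next
  case (Suc k)
  show ?case
    by (rule Ck_on_SucI[OF assms(1) bounded_linear.has_derivative[OF assms(2) Ck_on_has_derivative]])
       (use Suc in \<open>auto intro: Suc.IH Ck_on_derivative\<close>)
qed

lemma Ck_on_bilinear:
  assumes "open S" "bounded_bilinear B"
  shows "Ck_on k S f \<Longrightarrow> Ck_on k S g \<Longrightarrow> Ck_on k S (\<lambda>x. B (f x) (g x))"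
proof (induction k arbitrary: f g)
  case 0
  then show ?case
    unfolding Ck_on_0 differentiable_def using bounded_bilinear.FDERIV[OF assms(2)] by blast
next
  case (Suc k)
  have "Ck_on k S f" "Ck_on k S g"
    using Suc.prems Ck_on_mono[of "Suc k" S _ k] by auto
  then have D_Ck: "Ck_on k S (\<lambda>x. B (f x) (frechet_derivative g (at x) v)
                                    + B (frechet_derivative f (at x) v) (g x))" for v
    using Suc.prems by (intro Ck_on_add[OF assms(1)] Suc.IH Ck_on_derivative)
  show ?case
    by (rule Ck_on_SucI[OF assms(1) bounded_bilinear.FDERIV[OF assms(2)],
          OF Ck_on_has_derivative Ck_on_has_derivative D_Ck])
       (use Suc.prems in auto)
qed

lemma Ck_on_sum:
  assumes "open S" "finite I" "\<And>i. i \<in> I \<Longrightarrow> Ck_on k S (f i)"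
  shows "Ck_on k S (\<lambda>x. \<Sum>i\<in>I. f i x)"
  using assms(2,3) by (induction I rule: finite_induct) (auto intro: Ck_on_const Ck_on_add[OF assms(1)])

lemma Ck_on_Un_open:
  assumes "open S" "open T" "Ck_on k S f" "Ck_on k T f"
  shows "Ck_on k (S \<union> T) f"
  using assms unfolding Ck_on_def by (auto intro: continuous_on_open_Un)

lemma Ck_on_compose:
  fixes T :: "'a::real_normed_vector \<Rightarrow> 'c::euclidean_space" and \<beta> :: "'c \<Rightarrow> 'b::real_normed_vector"
  assumes "open S" "\<And>j. Ck_on j UNIV \<beta>"
  shows "Ck_on k S T \<Longrightarrow> Ck_on k S (\<lambda>x. \<beta> (T x))"
  using assms(2)
proof (induction k arbitrary: \<beta>)
  case 0
  have "\<beta> differentiable at y" for y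
    using "0.prems"(2)[of 0] unfolding Ck_on_0 by simp
  then show ?case
    using "0.prems"(1) differentiable_chain_at[of T _ \<beta>] unfolding Ck_on_0 o_def by blast
next
  case (Suc k)
  let ?DT = "\<lambda>x. frechet_derivative T (at x)" and ?D\<beta> = "\<lambda>y. frechet_derivative \<beta> (at y)"
  have D\<beta>: "(\<beta> has_derivative ?D\<beta> y) (at y)" for y
    using Ck_on_has_derivative[OF Suc.prems(2) UNIV_I] .
  have chain: "((\<lambda>x. \<beta> (T x)) has_derivative (\<lambda>v. ?D\<beta> (T x) (?DT x v))) (at x)" if "x \<in> S" for x
    using diff_chain_at[OF Ck_on_has_derivative[OF Suc.prems(1) that] D\<beta>] by (simp add: o_def)
  \<comment> \<open>expanding in the basis of 'c makes the chain rule a bilinear expression in C^k data\<close>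
  have expand: "?D\<beta> (T x) (?DT x v) = (\<Sum>b\<in>Basis. (?DT x v \<bullet> b) *\<^sub>R ?D\<beta> (T x) b)" for x v
  proof -
    have "linear (?D\<beta> (T x))" using has_derivative_linear[OF D\<beta>] .
    then show ?thesis
      by (subst euclidean_representation[symmetric, of "?DT x v"]) (simp add: linear_sum linear_scale)
  qed
  have D_Ck: "Ck_on k S (\<lambda>x. \<Sum>b\<in>Basis. (?DT x v \<bullet> b) *\<^sub>R ?D\<beta> (T x) b)" for v
  proof (intro Ck_on_sum[OF assms(1) finite_Basis] Ck_on_bilinear[OF assms(1) bounded_bilinear_scaleR])
    fix b :: 'c
    show "Ck_on k S (\<lambda>x. ?DT x v \<bullet> b)"
      using Ck_on_linear[OF assms(1) bounded_linear_inner_left Ck_on_derivative[OF Suc.prems(1)]] .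
    have "Ck_on j UNIV (\<lambda>y. ?D\<beta> y b)" for j
      using Ck_on_derivative[OF Suc.prems(2)] .
    moreover have "Ck_on k S T"
      using Ck_on_mono[OF Suc.prems(1), of k] by simp
    ultimately show "Ck_on k S (\<lambda>x. ?D\<beta> (T x) b)"
      using Suc.IH by blast
  qed
  show ?case
    by (rule Ck_on_SucI[OF assms(1) chain]) (use D_Ck in \<open>simp_all add: expand\<close>)
qed

section \<open>Smooth bump functions\<close>

(* The index k makes the family closed under differentiation. *)
definition flat_exp :: "nat \<Rightarrow> real \<Rightarrow> real" where
  "flat_exp k t = (if t > 0 then inverse t ^ k * exp (- inverse t) else 0)"

lemma flat_exp_has_derivative_pos:
  assumes "t > 0"
  shows "((\<lambda>s. inverse s ^ k * exp (- inverse s)) has_real_derivative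
           - real k * flat_exp (k + 1) t + flat_exp (k + 2) t) (at t)"
proof -
  have "t \<noteq> 0" using assms by simp
  have inv: "((\<lambda>s. inverse s) has_real_derivative - (inverse t ^ 2)) (at t)"
    using DERIV_inverse[OF \<open>t \<noteq> 0\<close>] by (simp add: numeral_2_eq_2)
  have pow: "((\<lambda>s. inverse s ^ k) has_real_derivative real k * inverse t ^ (k - 1) * - (inverse t ^ 2)) (at t)"
    using DERIV_chain2[OF DERIV_pow inv] by simp
  have exp: "((\<lambda>s. exp (- inverse s)) has_real_derivative exp (- inverse t) * inverse t ^ 2) (at t)"
    using DERIV_chain2[OF DERIV_exp DERIV_minus[OF inv]] by simp
  have "real k * inverse t ^ (k - 1) * - (inverse t ^ 2) * exp (- inverse t)
        + exp (- inverse t) * inverse t ^ 2 * inverse t ^ k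
        = - real k * flat_exp (k + 1) t + flat_exp (k + 2) t"
    using assms by (cases k) (simp_all add: flat_exp_def power2_eq_square algebra_simps)
  then show ?thesis
    using DERIV_mult[OF pow exp] by simp
qed

lemma flat_exp_tendsto_0: "((\<lambda>h. inverse h ^ Suc k * exp (- inverse h)) \<longlongrightarrow> 0) (at_right (0::real))"
proof -
  have "((\<lambda>x::real. x ^ Suc k / exp x) \<longlongrightarrow> 0) at_top"
    by (rule tendsto_power_div_exp_0)
  then show ?thesis
    unfolding filterlim_at_right_to_top by (simp add: exp_minus divide_inverse)
qed

lemma flat_exp_has_derivative: "(flat_exp k has_real_derivative - real k * flat_exp (k + 1) t + flat_exp (k + 2) t) (at t)"
proof -
  consider "t > 0" | "t < 0" | "t = 0" by linarith
  then show ?thesis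
  proof cases
    case 1
    show ?thesis
      by (rule has_field_derivative_transform_within_open[OF flat_exp_has_derivative_pos[OF 1] open_greaterThan[of 0]])
         (use 1 in \<open>auto simp: flat_exp_def\<close>)
  next
    case 2
    have "(flat_exp k has_real_derivative 0) (at t)"
      by (rule has_field_derivative_transform_within_open[OF DERIV_const open_lessThan[of 0]])
         (use 2 in \<open>auto simp: flat_exp_def\<close>)
    then show ?thesis using 2 by (simp add: flat_exp_def)
  next
    case 3
    have left: "((\<lambda>h. flat_exp k h / h) \<longlongrightarrow> 0) (at_left 0)"
    proof (rule Lim_transform_eventually[OF tendsto_const])
      have "\<forall>\<^sub>F h in at_left (0::real). h \<in> {-1<..<0}"
        by (rule eventually_at_left_real) simp
      then show "\<forall>\<^sub>F h in at_left 0. 0 = flat_exp k h / h"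
        by eventually_elim (simp add: flat_exp_def)
    qed
    have right: "((\<lambda>h. flat_exp k h / h) \<longlongrightarrow> 0) (at_right 0)"
    proof (rule Lim_transform_eventually[OF flat_exp_tendsto_0[of k]])
      have "\<forall>\<^sub>F h in at_right (0::real). h > 0"
        by (simp add: eventually_at_right_less)
      then show "\<forall>\<^sub>F h in at_right 0. inverse h ^ Suc k * exp (- inverse h) = flat_exp k h / h"
        by eventually_elim (simp add: flat_exp_def divide_inverse)
    qed
    have "(flat_exp k has_real_derivative 0) (at 0)"
      using filterlim_at_split[THEN iffD2, OF conjI[OF left right]]
      unfolding DERIV_def by (simp add: flat_exp_def)
    then show ?thesis using 3 by (simp add: flat_exp_def)
  qed
qed

lemma Ck_on_flat_exp: "Ck_on n UNIV (flat_exp k)"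
proof (induction n arbitrary: k)
  case 0
  then show ?case
    unfolding Ck_on_0 using flat_exp_has_derivative real_differentiable_def by blast
next
  case (Suc n)
  have "Ck_on n UNIV (\<lambda>t. (- real k * flat_exp (k + 1) t + flat_exp (k + 2) t) * v)" for v
    by (rule Ck_on_linear[OF open_UNIV bounded_linear_mult_left Ck_on_add[OF open_UNIV]],
        rule Ck_on_linear[OF open_UNIV bounded_linear_mult_right Suc.IH], rule Suc.IH)
  then show ?case
    by (rule Ck_on_SucI[OF open_UNIV has_field_derivative_imp_has_derivative[OF flat_exp_has_derivative]])
qed

definition bump :: "'a::euclidean_space \<Rightarrow> real \<Rightarrow> 'a \<Rightarrow> complex" where
  "bump c r z = of_real (flat_exp 0 (r\<^sup>2 - (z - c) \<bullet> (z - c)))"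

lemma Ck_on_bump: "Ck_on n UNIV (bump c r)"
proof -
  have "Ck_on n UNIV (\<lambda>z. r\<^sup>2 + - ((z + - c) \<bullet> (z + - c)))"
    by (rule Ck_on_add[OF open_UNIV Ck_on_const
          Ck_on_linear[OF open_UNIV bounded_linear_minus[OF bounded_linear_ident]
            Ck_on_bilinear[OF open_UNIV bounded_bilinear_inner]]];
        rule Ck_on_add[OF open_UNIV Ck_on_ident Ck_on_const])
  then have "Ck_on n UNIV (\<lambda>z. flat_exp 0 (r\<^sup>2 + - ((z + - c) \<bullet> (z + - c))))"
    by (rule Ck_on_compose[OF open_UNIV Ck_on_flat_exp])
  then show ?thesis
    unfolding bump_def using Ck_on_linear[OF open_UNIV bounded_linear_of_real] by simp
qed

lemma bump_eq_0: "r > 0 \<Longrightarrow> z \<notin> ball c r \<Longrightarrow> bump c r z = 0"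
proof -
  assume "r > 0" "z \<notin> ball c r"
  then have "r \<le> norm (z - c)" by (simp add: dist_norm norm_minus_commute)
  then have "r\<^sup>2 \<le> (z - c) \<bullet> (z - c)"
    using \<open>r > 0\<close> by (simp add: power_mono flip: power2_norm_eq_inner)
  then show ?thesis unfolding bump_def flat_exp_def by simp
qed

lemma bump_center: "r > 0 \<Longrightarrow> bump c r c \<noteq> 0"
  unfolding bump_def flat_exp_def by simp

section \<open>Supports\<close>

lemma in_fsupp: "f x \<noteq> 0 \<Longrightarrow> x \<in> fsupp f"
  unfolding fsupp_def by (rule closure_subset[THEN subsetD]) simp

lemma closed_fsupp: "closed (fsupp f)"
  unfolding fsupp_def by simp

lemma fsupp_subset_closed: "closed C \<Longrightarrow> (\<And>x. f x \<noteq> 0 \<Longrightarrow> x \<in> C) \<Longrightarrow> fsupp f \<subseteq> C"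
  unfolding fsupp_def by (rule closure_minimal) auto

lemma compact_fsupp_subset: "compact K \<Longrightarrow> fsupp f \<subseteq> K \<Longrightarrow> compact (fsupp f)"
  using compact_Int_closed[OF _ closed_fsupp, of K f] by (simp add: Int_absorb1)

lemma fsupp_eq_empty_iff: "fsupp f = {} \<longleftrightarrow> f = (\<lambda>_. 0)"
  using in_fsupp by (fastforce simp: fsupp_def)

lemma fsupp_zero [simp]: "fsupp (\<lambda>_. 0) = {}"
  unfolding fsupp_def by simp

lemma fsupp_cnj: "fsupp (\<lambda>x. cnj (f x)) = fsupp f"
  unfolding fsupp_def by simp

lemma fsupp_sum_subset:
  assumes "closed C" "\<And>i. i \<in> I \<Longrightarrow> fsupp (f i) \<subseteq> C"
  shows "fsupp (\<lambda>x. \<Sum>i\<in>I. f i x) \<subseteq> C"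
proof (rule fsupp_subset_closed[OF assms(1)])
  fix x
  assume "(\<Sum>i\<in>I. f i x) \<noteq> 0"
  then obtain i where "i \<in> I" "f i x \<noteq> 0"
    by (meson sum.neutral)
  then show "x \<in> C"
    using assms(2) in_fsupp by blast
qed

lemma fsupp_subset_ssupp: "fsupp (F n) \<subseteq> ssupp F"
  unfolding fsupp_def ssupp_def by (rule closure_mono) blast

lemma ssupp_lowest_order:
  assumes "open U" "U \<inter> ssupp F \<noteq> {}"
  obtains y n where "y \<in> U" "F n y \<noteq> 0" "\<And>j. j < n \<Longrightarrow> fsupp (F j) \<inter> U = {}"
proof -
  have "\<exists>n. \<exists>y\<in>U. F n y \<noteq> 0"
    using assms open_Int_closure_eq_empty[OF assms(1)] unfolding ssupp_def by blast
  define n where "n = (LEAST n. \<exists>y\<in>U. F n y \<noteq> 0)"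
  obtain y where "y \<in> U" "F n y \<noteq> 0"
    using LeastI_ex[OF \<open>\<exists>n. \<exists>y\<in>U. F n y \<noteq> 0\<close>] unfolding n_def by blast
  moreover have "fsupp (F j) \<inter> U = {}" if "j < n" for j
    using not_less_Least[OF that[unfolded n_def]] open_Int_closure_eq_empty[OF assms(1)]
    unfolding fsupp_def by blast
  ultimately show thesis
    using that by blast
qed

section \<open>Smooth functions on a manifold\<close>

lemma smooth_atlas_chart:
  assumes "smooth_atlas A" "(U, \<phi>) \<in> A"
  shows "open U" "open (\<phi> ` U)" "homeomorphism U (\<phi> ` U) \<phi> (inv_into U \<phi>)"
  using assms unfolding smooth_atlas_def is_chart_def by auto

lemma smooth_atlas_covers:
  assumes "smooth_atlas A"
  obtains U \<phi> where "(U, \<phi>) \<in> A" "y \<in> U"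
proof -
  have "y \<in> (\<Union>p\<in>A. fst p)"
    using assms unfolding smooth_atlas_def by simp
  then obtain p where "p \<in> A" "y \<in> fst p"
    by blast
  then show thesis
    using that by (cases p) auto
qed

lemma smooth_atlas_transition:
  assumes "smooth_atlas A" "(U, \<phi>) \<in> A" "(V, \<psi>) \<in> A"
  shows "Ck_on k (\<phi> ` (U \<inter> V)) (\<lambda>z. \<psi> (inv_into U \<phi> z))"
  using assms unfolding smooth_atlas_def smooth_on_iff_Ck_on by (fastforce simp: o_def)

lemma chart_image_open:
  assumes "smooth_atlas A" "(U, \<phi>) \<in> A" "open W" "W \<subseteq> U"
  shows "open (\<phi> ` W)"
proof -
  have "openin (top_of_set U) W"
    using assms smooth_atlas_chart(1)[OF assms(1,2)] openin_open_eq by blast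
  then have "openin (top_of_set (\<phi> ` U)) (\<phi> ` W)"
    by (rule homeomorphism_imp_open_map[OF smooth_atlas_chart(3)[OF assms(1,2)]])
  then show ?thesis
    using openin_open_eq[OF smooth_atlas_chart(2)[OF assms(1,2)]] by blast
qed

lemma smooth_fun_iff_Ck_on:
  "smooth_fun A f \<longleftrightarrow> (\<forall>(U, \<phi>)\<in>A. \<forall>k. Ck_on k (\<phi> ` U) (\<lambda>z. f (inv_into U \<phi> z)))"
  unfolding smooth_fun_def smooth_on_iff_Ck_on by (simp add: o_def)

lemma smooth_fun_const: "smooth_fun A (\<lambda>_. c)"
  unfolding smooth_fun_iff_Ck_on by (auto simp: Ck_on_const)

lemma smooth_fun_add:
  assumes "smooth_atlas A" "smooth_fun A f" "smooth_fun A g"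
  shows "smooth_fun A (\<lambda>x. f x + g x)"
  using assms Ck_on_add[OF smooth_atlas_chart(2)[OF assms(1)]]
  unfolding smooth_fun_iff_Ck_on by fast

lemma smooth_fun_sum:
  assumes "smooth_atlas A" "finite I" "\<And>i. i \<in> I \<Longrightarrow> smooth_fun A (f i)"
  shows "smooth_fun A (\<lambda>x. \<Sum>i\<in>I. f i x)"
  using assms(2,3)
  by (induction I rule: finite_induct) (auto intro: smooth_fun_const smooth_fun_add[OF assms(1)])

lemma smooth_fun_cnj:
  assumes "smooth_atlas A" "smooth_fun A f"
  shows "smooth_fun A (\<lambda>x. cnj (f x))"
  using assms Ck_on_linear[OF smooth_atlas_chart(2)[OF assms(1)] bounded_linear_cnj]
  unfolding smooth_fun_iff_Ck_on by fast

lemma smooth_fun_supported_in_chart: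
  fixes A :: "('m::t2_space set \<times> ('m \<Rightarrow> real^'n::finite)) set"
  assumes atlas: "smooth_atlas A" and chart: "(V, \<phi>) \<in> A"
    and "compact K" "K \<subseteq> V" "\<And>p. p \<notin> K \<Longrightarrow> b p = 0"
    and "\<And>p. p \<in> V \<Longrightarrow> b p = \<beta> (\<phi> p)" "\<And>k. Ck_on k UNIV \<beta>"
  shows "smooth_fun A b"
  unfolding smooth_fun_iff_Ck_on
proof (clarify)
  fix W \<psi> k
  assume chart': "(W, \<psi>) \<in> A"
  have inv: "inv_into W \<psi> (\<psi> p) = p" if "p \<in> W" for p
    using homeomorphism_apply1[OF smooth_atlas_chart(3)[OF atlas chart'] that] .
  define S1 where "S1 = \<psi> ` (W \<inter> V)"
  define S2 where "S2 = \<psi> ` (W - K)"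
  have "open S1" "open S2"
    unfolding S1_def S2_def using smooth_atlas_chart(1)[OF atlas] chart chart' \<open>compact K\<close>
    by (auto intro!: chart_image_open[OF atlas chart'] compact_imp_closed)
  have "Ck_on k S1 (\<lambda>z. \<beta> (\<phi> (inv_into W \<psi> z)))"
    unfolding S1_def
    by (rule Ck_on_compose[OF _ assms(7) smooth_atlas_transition[OF atlas chart' chart]])
       (rule \<open>open S1\<close>[unfolded S1_def])
  then have "Ck_on k S1 (\<lambda>z. b (inv_into W \<psi> z))"
    by (rule Ck_on_cong[OF \<open>open S1\<close>, rotated]) (auto simp: S1_def inv assms(6))
  moreover have "Ck_on k S2 (\<lambda>z. b (inv_into W \<psi> z))"
    by (rule Ck_on_cong[OF \<open>open S2\<close> _ Ck_on_const[of k S2 0]]) (auto simp: S2_def inv assms(5))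
  moreover have "\<psi> ` W = S1 \<union> S2"
    unfolding S1_def S2_def using \<open>K \<subseteq> V\<close> by blast
  ultimately show "Ck_on k (\<psi> ` W) (\<lambda>z. b (inv_into W \<psi> z))"
    using Ck_on_Un_open[OF \<open>open S1\<close> \<open>open S2\<close>] by simp
qed

lemma smooth_bump_exists:
  fixes A :: "('m::t2_space set \<times> ('m \<Rightarrow> real^'n::finite)) set"
  assumes atlas: "smooth_atlas A" and "open U" "y \<in> U"
  obtains b where "smooth_fun A b" "compact (fsupp b)" "fsupp b \<subseteq> U" "b y \<noteq> 0"
proof -
  obtain V \<phi> where chart: "(V, \<phi>) \<in> A" "y \<in> V"
    using smooth_atlas_covers[OF atlas] .
  note hom = smooth_atlas_chart(3)[OF atlas chart(1)]
  have inv: "inv_into V \<phi> (\<phi> p) = p" if "p \<in> V" for p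
    using homeomorphism_apply1[OF hom that] .
  have "open (\<phi> ` (U \<inter> V))"
    using smooth_atlas_chart(1)[OF atlas chart(1)] \<open>open U\<close> by (auto intro: chart_image_open[OF atlas chart(1)])
  then obtain r where r: "r > 0" "cball (\<phi> y) r \<subseteq> \<phi> ` (U \<inter> V)"
    using open_contains_cball \<open>y \<in> U\<close> chart(2) by blast
  define K where "K = inv_into V \<phi> ` cball (\<phi> y) r"
  have "compact K"
    unfolding K_def using r(2)
    by (intro compact_continuous_image continuous_on_subset[OF homeomorphism_cont2[OF hom]]) auto
  have "K \<subseteq> U \<inter> V"
    unfolding K_def using r(2) inv by force
  define b where "b p = (if p \<in> V then bump (\<phi> y) r (\<phi> p) else 0)" for p
  have b_outside: "b p = 0" if "p \<notin> K" for p
  proof (cases "p \<in> V")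
    case True
    have "\<phi> p \<notin> ball (\<phi> y) r"
    proof
      assume "\<phi> p \<in> ball (\<phi> y) r"
      then have "inv_into V \<phi> (\<phi> p) \<in> K"
        unfolding K_def by auto
      then show False
        using that inv[OF True] by simp
    qed
    then show ?thesis
      using True r(1) by (simp add: b_def bump_eq_0)
  qed (simp add: b_def)
  have "fsupp b \<subseteq> K"
    by (rule fsupp_subset_closed[OF compact_imp_closed[OF \<open>compact K\<close>]]) (use b_outside in blast)
  show thesis
  proof
    show "smooth_fun A b"
      by (rule smooth_fun_supported_in_chart[OF atlas chart(1) \<open>compact K\<close> _ b_outside _ Ck_on_bump])
         (use \<open>K \<subseteq> U \<inter> V\<close> in \<open>auto simp: b_def\<close>)
    show "compact (fsupp b)"
      using \<open>compact K\<close> \<open>fsupp b \<subseteq> K\<close> by (rule compact_fsupp_subset)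
    show "fsupp b \<subseteq> U"
      using \<open>fsupp b \<subseteq> K\<close> \<open>K \<subseteq> U \<inter> V\<close> by blast
    show "b y \<noteq> 0"
      using chart(2) bump_center[OF r(1)] by (simp add: b_def)
  qed
qed

section \<open>Local star products\<close>

lemma compact_series_in_smooth_series: "compact_series_in A U F \<Longrightarrow> smooth_series A F"
  unfolding compact_series_in_def smooth_series_def by blast

lemma smooth_series_sconj: "smooth_atlas A \<Longrightarrow> smooth_series A F \<Longrightarrow> smooth_series A (sconj F)"
  unfolding smooth_series_def sconj_def using smooth_fun_cnj by blast

lemma smooth_fun_Mr:
  assumes "local_star_product A pb Mr" "smooth_fun A f" "smooth_fun A g"
  shows "smooth_fun A (Mr r f g)"
  using assms by (simp add: local_star_product_def)

lemma fsupp_Mr_subset: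
  assumes "local_star_product A pb Mr" "smooth_fun A f" "smooth_fun A g"
  shows "fsupp (Mr r f g) \<subseteq> fsupp f \<inter> fsupp g"
  using assms by (simp add: local_star_product_def)

lemma Mr_0_eq_mult:
  assumes "local_star_product A pb Mr" "smooth_fun A f" "smooth_fun A g"
  shows "Mr 0 f g = (\<lambda>x. f x * g x)"
  using assms by (simp add: local_star_product_def)

lemma cnj_Mr:
  assumes "local_star_product A pb Mr" "smooth_fun A f" "smooth_fun A g"
  shows "cnj (Mr r f g x) = Mr r (\<lambda>x. cnj (g x)) (\<lambda>x. cnj (f x)) x"
  using assms unfolding local_star_product_def by (metis (no_types, lifting))

lemma star_assoc:
  assumes "local_star_product A pb Mr" "smooth_series A F" "smooth_series A G" "smooth_series A H"
  shows "star Mr (star Mr F G) H = star Mr F (star Mr G H)"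
  using assms by (simp add: local_star_product_def)

lemma Mr_eq_0_if_disjoint:
  assumes "local_star_product A pb Mr" "smooth_fun A f" "smooth_fun A g" "fsupp f \<inter> fsupp g = {}"
  shows "Mr r f g = (\<lambda>_. 0)"
  using fsupp_Mr_subset[OF assms(1-3), of r] assms(4) by (simp add: fsupp_eq_empty_iff[symmetric])

lemma smooth_series_star:
  assumes "smooth_atlas A" "local_star_product A pb Mr" "smooth_series A F" "smooth_series A G"
  shows "smooth_series A (star Mr F G)"
  using assms(3,4) unfolding smooth_series_def star_def
  by (intro allI smooth_fun_sum[OF assms(1)] finite_atMost smooth_fun_Mr[OF assms(2)]) auto

lemma fsupp_star_subset_left:
  assumes "local_star_product A pb Mr" "smooth_series A F" "smooth_series A G"
  shows "fsupp (star Mr F G n) \<subseteq> (\<Union>i\<le>n. fsupp (F i))"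
proof -
  have "closed (\<Union>i\<le>n. fsupp (F i))"
    using closed_fsupp by (intro closed_UN) auto
  moreover have "fsupp (Mr r (F i) (G (n - r - i))) \<subseteq> (\<Union>i\<le>n. fsupp (F i))" if "i \<le> n - r" for r i
    using that fsupp_Mr_subset[OF assms(1)] assms(2,3) unfolding smooth_series_def by fastforce
  ultimately show ?thesis
    unfolding star_def by (intro fsupp_sum_subset) auto
qed

lemma fsupp_star_subset_right:
  assumes "local_star_product A pb Mr" "smooth_series A F" "smooth_series A G"
  shows "fsupp (star Mr F G n) \<subseteq> (\<Union>j\<le>n. fsupp (G j))"
proof -
  have "closed (\<Union>j\<le>n. fsupp (G j))"
    using closed_fsupp by (intro closed_UN) auto
  moreover have "fsupp (Mr r (F i) (G (n - r - i))) \<subseteq> (\<Union>j\<le>n. fsupp (G j))" for r i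
    using fsupp_Mr_subset[OF assms(1)] assms(2,3) unfolding smooth_series_def by fastforce
  ultimately show ?thesis
    unfolding star_def by (intro fsupp_sum_subset) auto
qed

lemma star_eq_0_if_disjoint:
  assumes "local_star_product A pb Mr" "smooth_series A F" "smooth_series A G"
    "\<And>i j. fsupp (F i) \<inter> fsupp (G j) = {}"
  shows "star Mr F G = (\<lambda>_ _. 0)"
  using Mr_eq_0_if_disjoint[OF assms(1)] assms(2-4) unfolding smooth_series_def star_def by simp

lemma sconj_star:
  assumes "local_star_product A pb Mr" "smooth_series A F" "smooth_series A G"
  shows "sconj (star Mr F G) = star Mr (sconj G) (sconj F)"
proof (intro ext)
  fix n x
  have "sconj (star Mr F G) n x = (\<Sum>r\<le>n. \<Sum>i\<le>n - r. Mr r (sconj G (n - r - i)) (sconj F i) x)"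
    using cnj_Mr[OF assms(1)] assms(2,3) unfolding smooth_series_def sconj_def star_def by simp
  also have "\<dots> = (\<Sum>r\<le>n. \<Sum>i\<le>n - r. Mr r (sconj G i) (sconj F (n - r - i)) x)"
  proof (rule sum.cong[OF refl])
    fix r
    define m where "m = n - r"
    show "(\<Sum>i\<le>n - r. Mr r (sconj G (n - r - i)) (sconj F i) x) =
          (\<Sum>i\<le>n - r. Mr r (sconj G i) (sconj F (n - r - i)) x)"
      unfolding m_def[symmetric]
      by (rule sum.reindex_bij_witness[of _ "\<lambda>i. m - i" "\<lambda>i. m - i"]) auto
  qed
  also have "\<dots> = star Mr (sconj G) (sconj F) n x"
    unfolding star_def by simp
  finally show "sconj (star Mr F G) n x = star Mr (sconj G) (sconj F) n x" .
qed

lemma compact_series_in_star_left: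
  assumes "smooth_atlas A" "local_star_product A pb Mr" "compact_series_in A U F" "smooth_series A G"
  shows "compact_series_in A U (star Mr F G)"
  unfolding compact_series_in_def
proof (intro allI conjI)
  fix n
  have F: "smooth_series A F"
    using assms(3) by (rule compact_series_in_smooth_series)
  show "smooth_fun A (star Mr F G n)"
    using smooth_series_star[OF assms(1,2) F assms(4)] unfolding smooth_series_def ..
  have "compact (\<Union>i\<le>n. fsupp (F i))" "(\<Union>i\<le>n. fsupp (F i)) \<subseteq> U"
    using assms(3) unfolding compact_series_in_def by auto
  moreover have "fsupp (star Mr F G n) \<subseteq> (\<Union>i\<le>n. fsupp (F i))"
    by (rule fsupp_star_subset_left[OF assms(2) F assms(4)])
  ultimately show "compact (fsupp (star Mr F G n))" "fsupp (star Mr F G n) \<subseteq> U"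
    by (auto intro: compact_fsupp_subset)
qed

lemma compact_series_in_star_right:
  assumes "smooth_atlas A" "local_star_product A pb Mr" "smooth_series A F" "compact_series_in A U G"
  shows "compact_series_in A U (star Mr F G)"
  unfolding compact_series_in_def
proof (intro allI conjI)
  fix n
  have G: "smooth_series A G"
    using assms(4) by (rule compact_series_in_smooth_series)
  show "smooth_fun A (star Mr F G n)"
    using smooth_series_star[OF assms(1,2,3) G] unfolding smooth_series_def ..
  have "compact (\<Union>j\<le>n. fsupp (G j))" "(\<Union>j\<le>n. fsupp (G j)) \<subseteq> U"
    using assms(4) unfolding compact_series_in_def by auto
  moreover have "fsupp (star Mr F G n) \<subseteq> (\<Union>j\<le>n. fsupp (G j))"
    by (rule fsupp_star_subset_right[OF assms(2,3) G])
  ultimately show "compact (fsupp (star Mr F G n))" "fsupp (star Mr F G n) \<subseteq> U"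
    by (auto intro: compact_fsupp_subset)
qed

lemma star_sconj_star_sandwich:
  assumes "smooth_atlas A" "local_star_product A pb Mr" "smooth_series A H" "smooth_series A F"
  shows "star Mr (sconj (star Mr H F)) (star Mr H F) = star Mr (star Mr (sconj F) (star Mr (sconj H) H)) F"
proof -
  note smooth = smooth_series_sconj[OF assms(1)] smooth_series_star[OF assms(1,2)]
  have "star Mr (sconj (star Mr H F)) (star Mr H F) = star Mr (star Mr (sconj F) (sconj H)) (star Mr H F)"
    by (simp add: sconj_star[OF assms(2-4)])
  also have "\<dots> = star Mr (star Mr (star Mr (sconj F) (sconj H)) H) F"
    by (simp add: star_assoc[OF assms(2)] smooth assms(3,4))
  also have "\<dots> = star Mr (star Mr (sconj F) (star Mr (sconj H) H)) F"
    by (simp add: star_assoc[OF assms(2)] smooth assms(3,4))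
  finally show ?thesis .
qed

definition sconst :: "('m \<Rightarrow> complex) \<Rightarrow> nat \<Rightarrow> 'm \<Rightarrow> complex" where
  "sconst f = (\<lambda>n. if n = 0 then f else (\<lambda>_. 0))"

lemma compact_series_in_sconst:
  "smooth_fun A f \<Longrightarrow> compact (fsupp f) \<Longrightarrow> fsupp f \<subseteq> U \<Longrightarrow> compact_series_in A U (sconst f)"
  unfolding compact_series_in_def sconst_def by (simp add: smooth_fun_const)

lemma star_sconst_lowest_coeff:
  assumes "local_star_product A pb Mr" "smooth_fun A b" "smooth_series A F"
    and "\<And>j. j < n \<Longrightarrow> fsupp b \<inter> fsupp (F j) = {}"
  shows "star Mr (sconst b) F n = (\<lambda>x. b x * F n x)"
proof -
  have smooth: "smooth_fun A (sconst b i)" "smooth_fun A (F i)" for i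
    using assms(2,3) by (auto simp: sconst_def smooth_series_def smooth_fun_const)
  have summand: "Mr r (sconst b i) (F (n - r - i)) x = (if i = 0 then if r = 0 then b x * F n x else 0 else 0)"
    if "r \<le> n" for r i x
  proof (cases "r = 0 \<and> i = 0")
    case True
    then show ?thesis
      using Mr_0_eq_mult[OF assms(1,2) smooth(2)] by (simp add: sconst_def)
  next
    case False
    then have "fsupp (sconst b i) \<inter> fsupp (F (n - r - i)) = {}"
      using assms(4)[of "n - r"] that by (cases "i = 0") (auto simp: sconst_def)
    then show ?thesis
      using Mr_eq_0_if_disjoint[OF assms(1) smooth] False by auto
  qed
  have "star Mr (sconst b) F n x = b x * F n x" for x
  proof -
    have "star Mr (sconst b) F n x = (\<Sum>r\<le>n. \<Sum>i\<le>n - r. if i = 0 then if r = 0 then b x * F n x else 0 else 0)"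
      unfolding star_def using summand by (intro sum.cong) auto
    also have "\<dots> = b x * F n x"
      by (simp add: sum.delta)
    finally show ?thesis .
  qed
  then show ?thesis
    by auto
qed

section \<open>Support of a GNS vector\<close>

lemma lambda_linear_zero:
  assumes "lambda_linear A \<omega>"
  shows "\<omega> (\<lambda>_ _. 0) = (\<lambda>_. 0)"
proof -
  have "compact_series_in A UNIV (\<lambda>_ _. 0)"
    unfolding compact_series_in_def by (simp add: smooth_fun_const)
  then have "\<omega> (smul (\<lambda>_. 0) (\<lambda>_ _. 0)) = cmul (\<lambda>_. 0) (\<omega> (\<lambda>_ _. 0))"
    using assms unfolding lambda_linear_def by blast
  then show ?thesis
    unfolding smul_def cmul_def by simp
qed

lemma notin_functional_supp_iff:
  "x \<notin> functional_supp A \<sigma> \<longleftrightarrow>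
     (\<exists>U. open U \<and> x \<in> U \<and> (\<forall>G. compact_series_in A U G \<longrightarrow> \<sigma> G = (\<lambda>_. 0)))"
  unfolding functional_supp_def by blast

lemma gns_vector_supp_subset_ssupp:
  assumes "smooth_atlas A" "local_star_product A pb Mr" "lambda_linear A \<omega>" "smooth_series A F"
  shows "gns_vector_supp A Mr \<omega> F \<subseteq> ssupp F"
proof
  fix x
  assume x: "x \<in> gns_vector_supp A Mr \<omega> F"
  have vanish: "\<omega> (star Mr (star Mr (sconj F) G) F) = (\<lambda>_. 0)" if "compact_series_in A (- ssupp F) G" for G
  proof -
    have "fsupp (sconj F i) \<inter> fsupp (G j) = {}" for i j
      using that fsupp_subset_ssupp[of F i] unfolding compact_series_in_def sconj_def by (auto simp: fsupp_cnj)
    then have "star Mr (sconj F) G = (\<lambda>_ _. 0)"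
      by (rule star_eq_0_if_disjoint[OF assms(2) smooth_series_sconj[OF assms(1,4)]
            compact_series_in_smooth_series[OF that]])
    moreover have "star Mr (\<lambda>_ _. 0) F = (\<lambda>_ _. 0)"
      by (rule star_eq_0_if_disjoint[OF assms(2) _ assms(4)]) (simp_all add: smooth_series_def smooth_fun_const)
    ultimately show ?thesis
      using lambda_linear_zero[OF assms(3)] by simp
  qed
  show "x \<in> ssupp F"
  proof (rule ccontr)
    assume "x \<notin> ssupp F"
    moreover have "open (- ssupp F)"
      unfolding ssupp_def by auto
    ultimately have "x \<notin> gns_vector_supp A Mr \<omega> F"
      unfolding gns_vector_supp_def notin_functional_supp_iff using vanish by blast
    then show False
      using x by contradiction
  qed
qed

lemma gns_vector_functional_nonzero:
  fixes A :: "('m::t2_space set \<times> ('m \<Rightarrow> real^'n::finite)) set"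
  assumes "smooth_atlas A" "local_star_product A pb Mr" "faithful_functional A Mr \<omega>"
    and "compact_series_in A UNIV F" "open U" "U \<inter> ssupp F \<noteq> {}"
  obtains G where "compact_series_in A U G" "\<omega> (star Mr (star Mr (sconj F) G) F) \<noteq> (\<lambda>_. 0)"
proof -
  obtain y n where "y \<in> U" "F n y \<noteq> 0" and below: "\<And>j. j < n \<Longrightarrow> fsupp (F j) \<inter> U = {}"
    using ssupp_lowest_order[OF assms(5,6)] by blast
  obtain b where b: "smooth_fun A b" "compact (fsupp b)" "fsupp b \<subseteq> U" "b y \<noteq> 0"
    by (rule smooth_bump_exists[OF assms(1,5) \<open>y \<in> U\<close>])
  have F: "smooth_series A F"
    using assms(4) by (rule compact_series_in_smooth_series)
  have H: "compact_series_in A V (sconst b)" if "U \<subseteq> V" for V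
    using compact_series_in_sconst[OF b(1,2)] b(3) that by blast
  then have H_smooth: "smooth_series A (sconst b)"
    by (blast intro: compact_series_in_smooth_series)
  define P where "P = star Mr (sconst b) F"
  have "P n = (\<lambda>x. b x * F n x)"
    unfolding P_def using below b(3) by (intro star_sconst_lowest_coeff[OF assms(2) b(1) F]) blast
  then have "P \<noteq> (\<lambda>_ _. 0)"
    using b(4) \<open>F n y \<noteq> 0\<close> by (metis mult_eq_0_iff)
  moreover have "compact_series_in A UNIV P"
    unfolding P_def by (rule compact_series_in_star_left[OF assms(1,2) H F]) simp
  ultimately have "\<omega> (star Mr (sconj P) P) \<noteq> (\<lambda>_. 0)"
    using assms(3) unfolding faithful_functional_def by blast
  moreover have "star Mr (sconj P) P
      = star Mr (star Mr (sconj F) (star Mr (sconj (sconst b)) (sconst b))) F"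
    unfolding P_def by (rule star_sconj_star_sandwich[OF assms(1,2) H_smooth F])
  moreover have "compact_series_in A U (star Mr (sconj (sconst b)) (sconst b))"
    by (rule compact_series_in_star_right[OF assms(1,2) smooth_series_sconj[OF assms(1) H_smooth] H])
       simp
  ultimately show thesis
    using that by simp
qed

lemma ssupp_subset_gns_vector_supp:
  fixes A :: "('m::t2_space set \<times> ('m \<Rightarrow> real^'n::finite)) set"
  assumes "smooth_atlas A" "local_star_product A pb Mr" "faithful_functional A Mr \<omega>"
    and "compact_series_in A UNIV F"
  shows "ssupp F \<subseteq> gns_vector_supp A Mr \<omega> F"
proof
  fix x
  assume "x \<in> ssupp F"
  show "x \<in> gns_vector_supp A Mr \<omega> F"
  proof (rule ccontr)
    assume "x \<notin> gns_vector_supp A Mr \<omega> F"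
    then obtain U where "open U" "x \<in> U"
      and vanish: "\<And>G. compact_series_in A U G \<Longrightarrow> \<omega> (star Mr (star Mr (sconj F) G) F) = (\<lambda>_. 0)"
      unfolding gns_vector_supp_def notin_functional_supp_iff by blast
    moreover have "U \<inter> ssupp F \<noteq> {}"
      using \<open>x \<in> U\<close> \<open>x \<in> ssupp F\<close> by blast
    ultimately show False
      using gns_vector_functional_nonzero[OF assms] by metis
  qed
qed

theorem lemma6:
  fixes A :: "('m::{t2_space, second_countable_topology} set \<times> ('m \<Rightarrow> real^'n::finite)) set"
    and pb :: "('m \<Rightarrow> complex) \<Rightarrow> ('m \<Rightarrow> complex) \<Rightarrow> ('m \<Rightarrow> complex)"
    and Mr :: "nat \<Rightarrow> ('m \<Rightarrow> complex) \<Rightarrow> ('m \<Rightarrow> complex) \<Rightarrow> ('m \<Rightarrow> complex)"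
    and \<omega> :: "(nat \<Rightarrow> 'm \<Rightarrow> complex) \<Rightarrow> (nat \<Rightarrow> complex)"
    and F :: "nat \<Rightarrow> 'm \<Rightarrow> complex"
  assumes "smooth_atlas A"
    and "poisson_bracket A pb"
    and "local_star_product A pb Mr"
    and "lambda_linear A \<omega>"
    and "positive_functional A Mr \<omega>"
    and "faithful_functional A Mr \<omega>"
    and "compact_series_in A UNIV F"
  shows "gns_vector_supp A Mr \<omega> F = ssupp F"
proof
  show "gns_vector_supp A Mr \<omega> F \<subseteq> ssupp F"
    using gns_vector_supp_subset_ssupp[OF assms(1,3,4) compact_series_in_smooth_series[OF assms(7)]] .
  show "ssupp F \<subseteq> gns_vector_supp A Mr \<omega> F"
    using ssupp_subset_gns_vector_supp[OF assms(1,3,6,7)] .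
qed

end
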